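(* Let $V\subseteq\mathbb{R}^d$ be a finite set containing at least two distinct points, and let $p\in V$. Then $$\Pr_{(i,\theta)\sim D_2(V)}\big[\theta\text{ lies between }0\text{ and }p_i\big]\le\frac{2\|p\|_2^2}{L_2(V)}.$$
   Context: For each dimension $i$, let $\ell_i=\min_{v\in V}v_i$, $u_i=\max_{v\in V}v_i$, and let $\mathcal{I}_i$ be the set of consecutive intervals $[a,b]$ (with $a<b$) into which $[\ell_i,u_i]$ is partitioned by the projections $\{v_i:v\in V\}$. Let $\mathcal{I}_{\mathrm{all}}(V)=\{(i,[a,b]):i\in[d],[a,b]\in\mathcal{I}_i\}$ and $L_2(V)=\sum_{(i,[a,b])\in\mathcal{I}_{\mathrm{all}}(V)}(b-a)^2$. The distribution $D_2(V)$ over threshold cuts $(i,\theta)$: choose $(i,[a,b])\in\mathcal{I}_{\mathrm{all}}(V)$ with probability $(b-a)^2/L_2(V)$, then choose $\theta\in[a,b]$ with density $P_{a,b}(\theta)=\frac{4}{(b-a)^2}\min(\theta-a,b-\theta)$. The event in the claim is that the cut $(i,\theta)$ separates the origin from $p$. *)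

theory Defs
  imports "HOL-Analysis.Analysis"
begin

text \<open>Points of R^d are vectors of type real^'n (d = CARD('n)).
  An interval [a,b] is represented by the pair (a,b).\<close>

definition proj :: "(real^'n) set \<Rightarrow> 'n \<Rightarrow> real set" where
  "proj V i = (\<lambda>v. v $ i) ` V"

definition intervals_i :: "(real^'n) set \<Rightarrow> 'n \<Rightarrow> (real \<times> real) set" where
  "intervals_i V i = {(a,b). a \<in> proj V i \<and> b \<in> proj V i \<and> a < b \<and>
                        \<not> (\<exists>c \<in> proj V i. a < c \<and> c < b)}"

definition intervals_all :: "(real^'n) set \<Rightarrow> ('n \<times> (real \<times> real)) set" where
  "intervals_all V = {(i, ab). ab \<in> intervals_i V i}"

definition L2 :: "(real^'n) set \<Rightarrow> real" where
  "L2 V = (\<Sum>(i,(a,b)) \<in> intervals_all V. (b - a)^2)"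

definition Pab :: "real \<Rightarrow> real \<Rightarrow> real \<Rightarrow> real" where
  "Pab a b \<theta> = 4 / (b - a)^2 * min (\<theta> - a) (b - \<theta>)"

text \<open>Probability under D_2(V) of an event E on threshold cuts (i,theta):
  choose (i,[a,b]) with probability (b-a)^2/L_2(V), then theta in [a,b] with density Pab a b.\<close>
definition D2_prob :: "(real^'n) set \<Rightarrow> ('n \<Rightarrow> real \<Rightarrow> bool) \<Rightarrow> real" where
  "D2_prob V E = (\<Sum>(i,(a,b)) \<in> intervals_all V.
      (b - a)^2 / L2 V * integral {a..b} (\<lambda>\<theta>. indicator {\<theta>. E i \<theta>} \<theta> * Pab a b \<theta>))"

definition between0 :: "real \<Rightarrow> real \<Rightarrow> bool" where
  "between0 x \<theta> \<longleftrightarrow> min 0 x \<le> \<theta> \<and> \<theta> \<le> max 0 x"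

end

theory Submission
  imports Defs
begin

text \<open>Fix a coordinate i and put q = p_i. Since q is a projection of V, it lies outside the open
  interior of every partition interval [a,b], so the density factor min(theta - a, b - theta) is at
  most |theta - q|. Hence (b - a)^2 times the probability of cutting between 0 and q inside [a,b]
  is at most 4 times the integral of |theta - q| over [a,b] intersected with [0,q]. The intervals do
  not overlap, so the sum over them is at most 4 times the integral of |theta - q| over [0,q], which
  is 2 q^2; summing over the coordinates gives 2 ||p||^2.\<close>

lemma intervals_i_nonoverlapping:
  assumes "(a, b) \<in> intervals_i V i" "(a', b') \<in> intervals_i V i" "(a, b) \<noteq> (a', b')"
  shows "b \<le> a' \<or> b' \<le> a"
proof -
  have "a < b" "a' < b'" "a \<in> proj V i" "a' \<in> proj V i" "b \<in> proj V i" "b' \<in> proj V i"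
    and gap: "\<not> (a < a' \<and> a' < b)" "\<not> (a' < a \<and> a < b')" "\<not> (a < b' \<and> b' < b)" "\<not> (a' < b \<and> b < b')"
    using assms(1,2) unfolding intervals_i_def by auto
  then show ?thesis
    using assms(3) by (cases a a' rule: linorder_cases) auto
qed

lemma finite_intervals_i:
  assumes "finite V"
  shows "finite (intervals_i V i)"
proof (rule finite_subset)
  show "intervals_i V i \<subseteq> proj V i \<times> proj V i"
    unfolding intervals_i_def by auto
  show "finite (proj V i \<times> proj V i)"
    using assms unfolding proj_def by simp
qed

lemma sum_integral_nonoverlapping_le:
  fixes f :: "real \<Rightarrow> real" and I :: "(real \<times> real) set"
  assumes "finite I"
    and nonoverlapping: "\<And>a b a' b'. (a, b) \<in> I \<Longrightarrow> (a', b') \<in> I \<Longrightarrow> (a, b) \<noteq> (a', b') \<Longrightarrow>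
           b \<le> a' \<or> b' \<le> a"
    and cont: "continuous_on {c..d} f" and nonneg: "\<And>x. x \<in> {c..d} \<Longrightarrow> 0 \<le> f x"
  shows "(\<Sum>(a, b)\<in>I. integral {max a c..min b d} f) \<le> integral {c..d} f"
proof -
  define T where "T = (\<lambda>(a, b). {max a c..min b d})"
  have "(f has_integral (\<Sum>ab\<in>I. integral (T ab) f)) (\<Union>ab\<in>I. T ab)"
  proof (rule has_integral_UN[OF \<open>finite I\<close>])
    fix ab
    have "T ab \<subseteq> {c..d}" by (auto simp: T_def split: prod.split)
    then show "(f has_integral integral (T ab) f) (T ab)"
      using cont by (auto simp: T_def split: prod.split
          intro!: integrable_integral integrable_continuous_interval elim: continuous_on_subset)
  next
    show "pairwise (\<lambda>ab ab'. negligible (T ab \<inter> T ab')) I"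
    proof (rule pairwiseI)
      fix ab ab' assume "ab \<in> I" "ab' \<in> I" "ab \<noteq> ab'"
      then have "T ab \<inter> T ab' \<subseteq> {fst ab, fst ab'}"
        using nonoverlapping[of "fst ab" "snd ab" "fst ab'" "snd ab'"] by (auto simp: T_def split: prod.split)
      then show "negligible (T ab \<inter> T ab')"
        by (rule negligible_subset[rotated]) auto
    qed
  qed
  moreover have "(\<Union>ab\<in>I. T ab) \<subseteq> {c..d}"
    by (auto simp: T_def split: prod.split)
  moreover have "(f has_integral integral {c..d} f) {c..d}"
    using cont by (intro integrable_integral integrable_continuous_interval)
  ultimately have "(\<Sum>ab\<in>I. integral (T ab) f) \<le> integral {c..d} f"
    using nonneg by (intro has_integral_subset_le) auto
  then show ?thesis
    by (simp add: T_def case_prod_beta)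
qed

lemma has_integral_dist_endpoint:
  fixes a b q :: real
  assumes "a \<le> b" and "q = a \<or> q = b"
  shows "((\<lambda>x. \<bar>x - q\<bar>) has_integral (b - a)^2 / 2) {a..b}"
  using assms(2)
proof
  assume "q = a"
  have "((\<lambda>x. x - a) has_integral (b - a)^2 / 2 - (a - a)^2 / 2) {a..b}"
    using \<open>a \<le> b\<close>
    by (intro fundamental_theorem_of_calculus[where f = "\<lambda>x. (x - a)^2 / 2"])
       (auto intro!: derivative_eq_intros simp: has_real_derivative_iff_has_vector_derivative[symmetric])
  then show ?thesis
    using \<open>q = a\<close> by (subst has_integral_cong[where g = "\<lambda>x. x - a"]) auto
next
  assume "q = b"
  have "((\<lambda>x. b - x) has_integral (- ((b - b)^2 / 2) - (- ((b - a)^2 / 2)))) {a..b}"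
    using \<open>a \<le> b\<close>
    by (intro fundamental_theorem_of_calculus[where f = "\<lambda>x. - ((b - x)^2 / 2)"])
       (auto intro!: derivative_eq_intros simp: has_real_derivative_iff_has_vector_derivative[symmetric] field_simps)
  then show ?thesis
    using \<open>q = b\<close> by (subst has_integral_cong[where g = "\<lambda>x. b - x"]) auto
qed

lemma between0_Pab_integral_le:
  fixes a b q :: real
  assumes "a < b" and "\<not> (a < q \<and> q < b)"
  shows "(b - a)^2 * integral {a..b} (\<lambda>\<theta>. indicator {\<theta>. between0 q \<theta>} \<theta> * Pab a b \<theta>)
    \<le> 4 * integral {max a (min 0 q)..min b (max 0 q)} (\<lambda>\<theta>. \<bar>\<theta> - q\<bar>)"
proof -
  define S where "S = {max a (min 0 q)..min b (max 0 q)}"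
  have restrict: "(\<lambda>\<theta>. indicator {\<theta>. between0 q \<theta>} \<theta> * Pab a b \<theta>)
      = (\<lambda>\<theta>. if \<theta> \<in> {min 0 q..max 0 q} then Pab a b \<theta> else 0)"
    by (auto simp: indicator_def between0_def)
  have "integral {a..b} (\<lambda>\<theta>. indicator {\<theta>. between0 q \<theta>} \<theta> * Pab a b \<theta>) = integral S (Pab a b)"
    unfolding restrict integral_restrict_Int S_def by (simp add: Int_atLeastAtMost max.commute min.commute)
  also have "\<dots> = 4 / (b - a)^2 * integral S (\<lambda>\<theta>. min (\<theta> - a) (b - \<theta>))"
    unfolding Pab_def by (rule integral_mult_right)
  finally have "(b - a)^2 * integral {a..b} (\<lambda>\<theta>. indicator {\<theta>. between0 q \<theta>} \<theta> * Pab a b \<theta>)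
      = 4 * integral S (\<lambda>\<theta>. min (\<theta> - a) (b - \<theta>))"
    using \<open>a < b\<close> by simp
  also have "\<dots> \<le> 4 * integral S (\<lambda>\<theta>. \<bar>\<theta> - q\<bar>)"
  proof -
    have "min (\<theta> - a) (b - \<theta>) \<le> \<bar>\<theta> - q\<bar>" if "\<theta> \<in> S" for \<theta>
      \<comment> \<open>the endpoint nearer to \<theta> is at least as close as q, which is not in (a,b)\<close>
      using that assms(2) by (auto simp: S_def)
    then show ?thesis
      unfolding S_def by (auto intro!: integral_le integrable_continuous_interval continuous_intros)
  qed
  finally show ?thesis
    by (simp add: S_def)
qed

lemma sum_intervals_i_between0_le:
  assumes "finite V" and "q \<in> proj V i"
  shows "(\<Sum>(a, b)\<in>intervals_i V i.
      (b - a)^2 * integral {a..b} (\<lambda>\<theta>. indicator {\<theta>. between0 q \<theta>} \<theta> * Pab a b \<theta>)) \<le> 2 * q^2"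
proof -
  have "(\<Sum>(a, b)\<in>intervals_i V i.
      (b - a)^2 * integral {a..b} (\<lambda>\<theta>. indicator {\<theta>. between0 q \<theta>} \<theta> * Pab a b \<theta>))
    \<le> (\<Sum>(a, b)\<in>intervals_i V i. 4 * integral {max a (min 0 q)..min b (max 0 q)} (\<lambda>\<theta>. \<bar>\<theta> - q\<bar>))"
    using assms(2) unfolding intervals_i_def
    by (intro sum_mono) (auto intro!: between0_Pab_integral_le)
  also have "\<dots> = 4 * (\<Sum>(a, b)\<in>intervals_i V i. integral {max a (min 0 q)..min b (max 0 q)} (\<lambda>\<theta>. \<bar>\<theta> - q\<bar>))"
    by (simp add: sum_distrib_left case_prod_beta)
  also have "\<dots> \<le> 4 * integral {min 0 q..max 0 q} (\<lambda>\<theta>. \<bar>\<theta> - q\<bar>)"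
    by (intro mult_left_mono sum_integral_nonoverlapping_le finite_intervals_i[OF assms(1)]
        intervals_i_nonoverlapping continuous_intros) auto
  also have "\<dots> = 2 * q^2"
    using has_integral_dist_endpoint[of "min 0 q" "max 0 q" q] by (auto simp: integral_unique max_def)
  finally show ?thesis .
qed

lemma D2_prob_eq_sum_coordinates:
  assumes "finite V"
  shows "D2_prob V E = (\<Sum>i\<in>UNIV. \<Sum>(a, b)\<in>intervals_i V i.
      (b - a)^2 * integral {a..b} (\<lambda>\<theta>. indicator {\<theta>. E i \<theta>} \<theta> * Pab a b \<theta>)) / L2 V"
proof -
  define F where "F = (\<lambda>i (a, b). (b - a)^2 * integral {a..b} (\<lambda>\<theta>. indicator {\<theta>. E i \<theta>} \<theta> * Pab a b \<theta>))"
  have "intervals_all V = Sigma UNIV (intervals_i V)"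
    unfolding intervals_all_def by auto
  then have "D2_prob V E = (\<Sum>(i, ab)\<in>Sigma UNIV (intervals_i V). F i ab) / L2 V"
    unfolding D2_prob_def F_def sum_divide_distrib by (auto intro!: sum.cong)
  also have "\<dots> = (\<Sum>i\<in>UNIV. \<Sum>ab\<in>intervals_i V i. F i ab) / L2 V"
    using finite_intervals_i[OF assms] by (subst sum.Sigma) auto
  finally show ?thesis
    by (simp add: F_def)
qed

lemma L2_nonneg: "0 \<le> L2 V"
  unfolding L2_def by (intro sum_nonneg) auto

lemma power2_norm_vec_eq_sum: "(norm x)^2 = (\<Sum>i\<in>UNIV. (x $ i)^2)"
  by (simp add: norm_vec_def L2_set_def sum_nonneg)

text \<open>The hypothesis that V has two distinct points only guarantees L2 V > 0; without it both
  sides are divided by 0 and the bound holds trivially.\<close>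

theorem lemma4p3:
  fixes V :: "(real^'n) set" and p :: "real^'n"
  assumes "finite V" and "\<exists>x\<in>V. \<exists>y\<in>V. x \<noteq> y" and "p \<in> V"
  shows "D2_prob V (\<lambda>i \<theta>. between0 (p $ i) \<theta>) \<le> 2 * (norm p)^2 / L2 V"
proof -
  have "D2_prob V (\<lambda>i \<theta>. between0 (p $ i) \<theta>) = (\<Sum>i\<in>UNIV. \<Sum>(a, b)\<in>intervals_i V i.
      (b - a)^2 * integral {a..b} (\<lambda>\<theta>. indicator {\<theta>. between0 (p $ i) \<theta>} \<theta> * Pab a b \<theta>)) / L2 V"
    using assms(1) by (rule D2_prob_eq_sum_coordinates)
  also have "\<dots> \<le> (\<Sum>i\<in>UNIV. 2 * (p $ i)^2) / L2 V"
    using assms(3) L2_nonneg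
    by (intro divide_right_mono sum_mono sum_intervals_i_between0_le[OF assms(1)]) (auto simp: proj_def)
  also have "\<dots> = 2 * (norm p)^2 / L2 V"
    by (simp add: power2_norm_vec_eq_sum sum_distrib_left)
  finally show ?thesis .
qed

end
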